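(* Let $f:[0,\infty)\to[0,\infty)$ be a measurable function with $\int_0^\infty ds\, f(s)\le 1$, let $g(t)=1-\int_0^t ds\,f(s)$, and let $\kappa(t)$ be the solution of the integral equation $$\int_0^t ds\, g(t-s)\kappa(s)=f(t),$$ equivalently $\widehat\kappa(p)=\dfrac{p\widehat f(p)}{1-\widehat f(p)}$. Let $B$ be a completely positive map on $M_d$ with $B\mathbf 1=\mathbf 1$. Define $L_t=\kappa(t)(B-I)$, $t\ge0$. Then $L_t$ is the generator of a non-Markovian master equation, i.e. the solution $A_t$, $t\ge 0$, of $$\frac{dA_t}{dt}=\int_0^t ds\,L_{t-s}A_s,\qquad A_0=I,$$ is completely positive and satisfies $A_t\mathbf 1=\mathbf 1$ for all $t\ge0$.
   Context: $M_d$ denotes the $C^*$-algebra of complex $d\times d$ matrices, with unit $\mathbf 1$; $\mathcal B(M_d)$ is the algebra of linear maps $M_d\to M_d$, with identity map $I$. For a scalar function $f$ on $[0,\infty)$, $\widehat f(p)=\int_0^\infty dt\,e^{-pt}f(t)$ is its Laplace transform; similarly for $\mathcal B(M_d)$-valued functions. *)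

theory Defs
  imports "HOL-Analysis.Analysis"
begin

type_synonym 'd cmat = "complex ^ 'd ^ 'd"

definition cmat_scale :: "complex \<Rightarrow> 'd::finite cmat \<Rightarrow> 'd cmat" where
  "cmat_scale c X = (\<chi> i j. c * X $ i $ j)"

definition cmat_linear :: "('d::finite cmat \<Rightarrow> 'd cmat) \<Rightarrow> bool" where
  "cmat_linear T \<longleftrightarrow> (\<forall>X Y. T (X + Y) = T X + T Y) \<and> (\<forall>c X. T (cmat_scale c X) = cmat_scale c (T X))"

definition nonneg_complex :: "complex \<Rightarrow> bool" where
  "nonneg_complex z \<longleftrightarrow> Im z = 0 \<and> Re z \<ge> 0"

text \<open>A k x k block matrix with entries in M_d (an element of M_k(M_d) = M_{kd}) is positive
  (positive semidefinite): for every vector (v_0,...,v_{k-1}) in (C^d)^k,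
  sum_{i,j} v_i^* X_{ij} v_j >= 0.\<close>
definition block_positive :: "nat \<Rightarrow> (nat \<Rightarrow> nat \<Rightarrow> 'd::finite cmat) \<Rightarrow> bool" where
  "block_positive k X \<longleftrightarrow>
     (\<forall>v :: nat \<Rightarrow> complex ^ 'd.
        nonneg_complex (\<Sum>i<k. \<Sum>j<k. \<Sum>a\<in>UNIV. cnj (v i $ a) * ((X i j *v v j) $ a)))"

text \<open>Complete positivity: id_k \<otimes> T is positive for every k.\<close>
definition completely_positive :: "('d::finite cmat \<Rightarrow> 'd cmat) \<Rightarrow> bool" where
  "completely_positive T \<longleftrightarrow>
     cmat_linear T \<and>
     (\<forall>k X. block_positive k X \<longrightarrow> block_positive k (\<lambda>i j. T (X i j)))"

end

theory Submission
  imports Defs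
begin

(*
  Write (a \<star> h)(t) = \<integral>_0^t a(t-s) h(s) ds for the truncated convolution conv. Instead of
  Laplace transforms the proof uses the following three facts, for u(t) = A_t X.
  1. Renewal equation. From g \<star> \<kappa> = f, where g = 1 - \<integral>_0^. f, associativity of \<star> (Fubini)
     and the fundamental theorem of calculus give  u(t) = g(t) u(0) + (f \<star> B u)(t).
  2. Positivity of the Picard iterates H_0(t) X = X, H_{k+1}(t) X = g(t) X + (f \<star> B H_k X)(t):
     since g, f \<ge> 0 and B is completely positive and unital, every H_k(t) is completely
     positive (nonnegative superpositions of CP maps are CP) and unital.
  3. Convergence H_k(t) X \<rightarrow> u(t): in a weighted norm sup e^{-\<lambda>s} |.| the map
     v \<mapsto> f \<star> B v is a contraction for large \<lambda>.
  Complete positivity and unitality then pass to the limit.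
*)

lemma indicator_Icc_reflect:
  "indicator {0..(t::real)} (t - x) = (indicator {0..t} x :: 'b::zero_neq_one)"
  by (auto simp: indicator_def)

lemma set_integral_reflect:
  fixes a :: "real \<Rightarrow> 'a::{banach,second_countable_topology}"
  shows "(LINT s:{0..t}|lborel. a (t - s)) = (LINT r:{0..t}|lborel. a r)"
proof -
  have "(LINT r:{0..t}|lborel. a r)
      = \<bar>-1\<bar> *\<^sub>R (\<integral>x. indicator {0..t} (t + -1*x) *\<^sub>R a (t + -1 * x) \<partial>lborel)"
    unfolding set_lebesgue_integral_def by (rule lborel_integral_real_affine) simp
  also have "\<dots> = (LINT s:{0..t}|lborel. a (t - s))"
    unfolding set_lebesgue_integral_def by (simp add: indicator_Icc_reflect)
  finally show ?thesis ..
qed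

lemma set_integrable_reflect:
  fixes a :: "real \<Rightarrow> 'a::{banach,second_countable_topology}"
  shows "set_integrable lborel {0..t} (\<lambda>s. a (t - s)) \<longleftrightarrow> set_integrable lborel {0..t} a"
proof -
  have "set_integrable lborel {0..t} a
      \<longleftrightarrow> integrable lborel (\<lambda>x. indicator {0..t} (t + -1*x) *\<^sub>R a (t + -1 * x))"
    unfolding set_integrable_def by (rule lborel_integrable_real_affine_iff[symmetric]) simp
  also have "\<dots> \<longleftrightarrow> set_integrable lborel {0..t} (\<lambda>s. a (t - s))"
    unfolding set_integrable_def by (simp add: indicator_Icc_reflect)
  finally show ?thesis ..
qed

lemma nn_integral_Icc_reflect:
  fixes \<phi> :: "real \<Rightarrow> ennreal"
  assumes [measurable]: "\<phi> \<in> borel_measurable borel"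
  shows "(\<integral>\<^sup>+ s. indicator {0..t} s * \<phi> (t - s) \<partial>lborel) = (\<integral>\<^sup>+ r. indicator {0..t} r * \<phi> r \<partial>lborel)"
proof -
  have "(\<integral>\<^sup>+ r. indicator {0..t} r * \<phi> r \<partial>lborel)
      = ennreal \<bar>-1\<bar> * (\<integral>\<^sup>+ x. indicator {0..t} (t + -1*x) * \<phi> (t + -1 * x) \<partial>lborel)"
    by (rule nn_integral_real_affine) auto
  also have "\<dots> = (\<integral>\<^sup>+ s. indicator {0..t} s * \<phi> (t - s) \<partial>lborel)"
    by (simp add: indicator_Icc_reflect)
  finally show ?thesis ..
qed

lemma integral_translate:
  fixes \<phi> :: "real \<Rightarrow> 'a::{banach,second_countable_topology}"
  shows "(\<integral>r. \<phi> r \<partial>lborel) = (\<integral>v. \<phi> (v - s) \<partial>lborel)"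
  using lborel_integral_real_affine[of 1 \<phi> "-s"] by simp

text \<open>Unlike the library lemma \<open>integral_scaleR_left\<close>, this holds without integrability:
  for \<open>c \<noteq> 0\<close> integrability of \<open>f\<close> and of \<open>\<lambda>x. f x *\<^sub>R c\<close> are equivalent.\<close>

lemma integral_scaleR_left_unconditional:
  fixes f :: "'b \<Rightarrow> real" and c :: "'a::euclidean_space"
  shows "(\<integral>x. f x *\<^sub>R c \<partial>M) = integral\<^sup>L M f *\<^sub>R c"
proof (cases "c = 0 \<or> integrable M f")
  case True then show ?thesis by auto
next
  case False
  have "\<not> integrable M (\<lambda>x. f x *\<^sub>R c)"
  proof
    assume "integrable M (\<lambda>x. f x *\<^sub>R c)"
    then have "integrable M (\<lambda>x. inner (f x *\<^sub>R c) c / (inner c c))"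
      by (intro integrable_divide integrable_inner_left)
    moreover have "(\<lambda>x. inner (f x *\<^sub>R c) c / (inner c c)) = f" using False by auto
    ultimately show False using False by simp
  qed
  then show ?thesis using False by (simp add: not_integrable_integral_eq)
qed

lemma set_integrable_bounded_Icc:
  fixes h :: "real \<Rightarrow> 'a::{banach,second_countable_topology}"
  assumes [measurable]: "h \<in> borel_measurable borel" and "\<And>s. s \<in> {a..b} \<Longrightarrow> norm (h s) \<le> H"
  shows "set_integrable lborel {a..b} h"
  unfolding set_integrable_def
  by (rule integrableI_bounded_set_indicator[where B=H])
     (use assms in \<open>auto simp: emeasure_lborel_Icc_eq\<close>)

lemma set_integral_abs_mono:
  assumes "0 \<le> s" "s \<le> t" "set_integrable lborel {0..t} (a::real\<Rightarrow>real)"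
  shows "(LINT r:{0..s}|lborel. \<bar>a r\<bar>) \<le> (LINT r:{0..t}|lborel. \<bar>a r\<bar>)"
proof -
  have i: "set_integrable lborel {0..t} (\<lambda>r. \<bar>a r\<bar>)" using assms(3) by (rule set_integrable_abs)
  have i2: "set_integrable lborel {0..s} (\<lambda>r. \<bar>a r\<bar>)"
    by (rule set_integrable_subset[OF i]) (use assms in auto)
  show ?thesis unfolding set_lebesgue_integral_def
    by (rule integral_mono) (use i i2 assms in \<open>auto simp: set_integrable_def indicator_def\<close>)
qed

lemma onorm_bound: "bounded_linear B \<Longrightarrow> norm x \<le> M \<Longrightarrow> norm (B x) \<le> onorm B * M"
  using onorm[of B x] onorm_pos_le[of B] by (meson mult_left_mono order_trans)

lemma set_integral_vector_derivative:
  fixes u w :: "real \<Rightarrow> 'a::euclidean_space"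
  assumes s: "0 \<le> s"
    and d: "\<And>\<tau>. \<tau> \<in> {0..s} \<Longrightarrow> (u has_vector_derivative w \<tau>) (at \<tau> within {0..})"
    and i: "set_integrable lborel {0..s} w"
  shows "(LINT \<tau>:{0..s}|lborel. w \<tau>) = u s - u 0"
proof -
  have "(w has_integral (u s - u 0)) {0..s}"
    by (rule fundamental_theorem_of_calculus[OF s])
       (auto intro: has_vector_derivative_within_subset[OF d])
  then show ?thesis using set_borel_integral_eq_integral(2)[OF i] by (simp add: integral_unique)
qed


section \<open>Truncated convolution\<close>

text \<open>\<open>conv a h t = \<integral>\<^sub>0\<^sup>t a(t - s) h(s) ds\<close>: the convolution of a scalar kernel with a
  vector-valued function on the half line; the master equation reads \<open>u' = conv L u\<close>.\<close>

definition conv :: "(real \<Rightarrow> real) \<Rightarrow> (real \<Rightarrow> 'a::{banach,second_countable_topology}) \<Rightarrow> real \<Rightarrow> 'a"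
  where "conv a h t = (LINT s:{0..t}|lborel. a (t - s) *\<^sub>R h s)"

lemma sets_pair_borel_lborel: "sets (borel \<Otimes>\<^sub>M lborel) = sets (borel \<Otimes>\<^sub>M (borel::real measure))"
  by (rule sets_pair_measure_cong) auto

lemma sets_pair_lborel: "sets (lborel \<Otimes>\<^sub>M lborel) = sets (borel \<Otimes>\<^sub>M (borel::real measure))"
  by (rule sets_pair_measure_cong) auto

lemma conv_measurable[measurable]:
  assumes [measurable]: "a \<in> borel_measurable borel" "h \<in> borel_measurable borel"
  shows "conv a h \<in> borel_measurable borel"
  unfolding conv_def set_lebesgue_integral_def
  apply (rule lborel.borel_measurable_lebesgue_integral)
  apply (subst measurable_cong_sets[OF sets_pair_borel_lborel refl])
  unfolding atLeastAtMost_iff indicator_def by measurable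

lemma conv_cong:
  assumes "\<And>s. s \<in> {0..t} \<Longrightarrow> a (t - s) = a' (t - s)" "\<And>s. s \<in> {0..t} \<Longrightarrow> h s = h' s"
  shows "conv a h t = conv a' h' t"
  unfolding conv_def by (rule set_lebesgue_integral_cong) (auto simp: assms)

lemma conv_cong_AE:
  assumes [measurable]: "a \<in> borel_measurable borel" "a' \<in> borel_measurable borel"
    "h \<in> borel_measurable borel"
  assumes "AE s in lborel. s \<in> {0..t} \<longrightarrow> a (t - s) = a' (t - s)"
  shows "conv a h t = conv a' h t"
  unfolding conv_def by (rule set_lebesgue_integral_cong_AE) (use assms in auto)

lemma conv_const:
  fixes c :: "'a::euclidean_space"
  shows "conv a (\<lambda>_. c) t = (LINT r:{0..t}|lborel. a r) *\<^sub>R c"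
proof -
  have "conv a (\<lambda>_. c) t = (\<integral>s. (indicator {0..t} s * a (t - s)) *\<^sub>R c \<partial>lborel)"
    unfolding conv_def set_lebesgue_integral_def by simp
  also have "\<dots> = (LINT s:{0..t}|lborel. a (t - s)) *\<^sub>R c"
    unfolding set_lebesgue_integral_def by (simp add: integral_scaleR_left_unconditional)
  finally show ?thesis by (simp add: set_integral_reflect)
qed

lemma conv_integrable:
  fixes h :: "real \<Rightarrow> 'a::{banach,second_countable_topology}"
  assumes [measurable]: "a \<in> borel_measurable borel" "h \<in> borel_measurable borel"
    and ia: "set_integrable lborel {0..t} a"
    and hb: "\<And>s. s \<in> {0..t} \<Longrightarrow> norm (h s) \<le> H"
  shows "set_integrable lborel {0..t} (\<lambda>s. a (t - s) *\<^sub>R h s)"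
proof -
  have "set_integrable lborel {0..t} (\<lambda>s. a (t - s))"
    using ia by (simp add: set_integrable_reflect)
  then have dom: "set_integrable lborel {0..t} (\<lambda>s. a (t - s) * H)" by simp
  show ?thesis unfolding set_integrable_def
  proof (rule Bochner_Integration.integrable_bound[OF dom[unfolded set_integrable_def]])
    show "(\<lambda>x. indicat_real {0..t} x *\<^sub>R a (t - x) *\<^sub>R h x) \<in> borel_measurable lborel"
      by measurable
    show "AE x in lborel. norm (indicat_real {0..t} x *\<^sub>R a (t - x) *\<^sub>R h x)
        \<le> norm (indicat_real {0..t} x *\<^sub>R (a (t - x) * H))"
    proof (intro AE_I2)
      fix x
      show "norm (indicat_real {0..t} x *\<^sub>R a (t - x) *\<^sub>R h x)
          \<le> norm (indicat_real {0..t} x *\<^sub>R (a (t - x) * H))"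
      proof (cases "x \<in> {0..t}")
        case True
        then have "norm (h x) \<le> H" by (rule hb)
        then show ?thesis using True by (auto simp: abs_mult intro!: mult_left_mono)
      qed auto
    qed
  qed
qed

lemma conv_norm_le:
  fixes h :: "real \<Rightarrow> 'a::{banach,second_countable_topology}"
  assumes [measurable]: "a \<in> borel_measurable borel" "h \<in> borel_measurable borel"
    "g \<in> borel_measurable borel"
    and ia: "set_integrable lborel {0..t} a"
    and hb: "\<And>s. s \<in> {0..t} \<Longrightarrow> norm (h s) \<le> g s"
    and gb: "\<And>s. s \<in> {0..t} \<Longrightarrow> g s \<le> H"
  shows "norm (conv a h t) \<le> (LINT s:{0..t}|lborel. \<bar>a (t - s)\<bar> * g s)"
proof -
  have i1: "set_integrable lborel {0..t} (\<lambda>s. a (t - s) *\<^sub>R h s)"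
    by (rule conv_integrable[OF _ _ ia]) (use hb gb in \<open>auto intro: order_trans\<close>)
  have i2: "set_integrable lborel {0..t} (\<lambda>s. \<bar>a (t - s)\<bar> *\<^sub>R g s)"
  proof (rule conv_integrable[where a="\<lambda>x. \<bar>a x\<bar>" and H=H])
    show "set_integrable lborel {0..t} (\<lambda>x. \<bar>a x\<bar>)" using ia by (rule set_integrable_abs)
    fix s assume "s \<in> {0..t}"
    then have "0 \<le> g s" "g s \<le> H" using hb[of s] gb[of s] norm_ge_zero[of "h s"] by linarith+
    then show "norm (g s) \<le> H" by simp
  qed auto
  have "norm (conv a h t) \<le> (\<integral>x. norm (indicator {0..t} x *\<^sub>R (a (t - x) *\<^sub>R h x)) \<partial>lborel)"
    unfolding conv_def set_lebesgue_integral_def by (rule integral_norm_bound)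
  also have "\<dots> \<le> (\<integral>x. indicator {0..t} x *\<^sub>R (\<bar>a (t - x)\<bar> * g x) \<partial>lborel)"
  proof (rule integral_mono)
    show "integrable lborel (\<lambda>x. norm (indicat_real {0..t} x *\<^sub>R a (t - x) *\<^sub>R h x))"
      using integrable_norm[OF i1[unfolded set_integrable_def]] .
    show "integrable lborel (\<lambda>x. indicat_real {0..t} x *\<^sub>R (\<bar>a (t - x)\<bar> * g x))"
      using i2 unfolding set_integrable_def by auto
    fix x
    show "norm (indicat_real {0..t} x *\<^sub>R a (t - x) *\<^sub>R h x)
        \<le> indicat_real {0..t} x *\<^sub>R (\<bar>a (t - x)\<bar> * g x)"
      using hb[of x] by (auto simp: indicator_def intro: mult_left_mono)
  qed
  finally show ?thesis unfolding set_lebesgue_integral_def .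
qed

lemma conv_bound:
  fixes h :: "real \<Rightarrow> 'a::{banach,second_countable_topology}"
  assumes [measurable]: "a \<in> borel_measurable borel" "h \<in> borel_measurable borel"
    and ia: "set_integrable lborel {0..t} a"
    and hb: "\<And>s. s \<in> {0..t} \<Longrightarrow> norm (h s) \<le> H"
  shows "norm (conv a h t) \<le> H * (LINT r:{0..t}|lborel. \<bar>a r\<bar>)"
proof -
  have "norm (conv a h t) \<le> (LINT s:{0..t}|lborel. \<bar>a (t - s)\<bar> * H)"
    by (rule conv_norm_le[OF _ _ _ ia hb]) auto
  also have "\<dots> = H * (LINT s:{0..t}|lborel. \<bar>a (t - s)\<bar>)" by (simp add: mult.commute)
  also have "\<dots> = H * (LINT r:{0..t}|lborel. \<bar>a r\<bar>)"
    using set_integral_reflect[where a="\<lambda>x. \<bar>a x\<bar>" and t=t] by simp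
  finally show ?thesis .
qed

lemma conv_bound_Icc:
  fixes h :: "real \<Rightarrow> 'a::{banach,second_countable_topology}"
  assumes [measurable]: "a \<in> borel_measurable borel" "h \<in> borel_measurable borel"
    and ia: "set_integrable lborel {0..t} a"
    and hb: "\<And>s. s \<in> {0..t} \<Longrightarrow> norm (h s) \<le> H" and H: "0 \<le> H"
    and s: "s \<in> {0..t}"
  shows "norm (conv a h s) \<le> H * (LINT r:{0..t}|lborel. \<bar>a r\<bar>)"
proof -
  have "norm (conv a h s) \<le> H * (LINT r:{0..s}|lborel. \<bar>a r\<bar>)"
    by (rule conv_bound) (use s hb in \<open>auto intro: set_integrable_subset[OF ia]\<close>)
  also have "\<dots> \<le> H * (LINT r:{0..t}|lborel. \<bar>a r\<bar>)"
    by (rule mult_left_mono[OF set_integral_abs_mono[OF _ _ ia] H]) (use s in auto)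
  finally show ?thesis .
qed

lemma conv_add:
  assumes "set_integrable lborel {0..t} (\<lambda>s. a (t - s) *\<^sub>R h1 s)"
    "set_integrable lborel {0..t} (\<lambda>s. a (t - s) *\<^sub>R h2 s)"
  shows "conv a (\<lambda>s. h1 s + h2 s) t = conv a h1 t + conv a h2 t"
  unfolding conv_def using set_integral_add(2)[OF assms] by (simp add: scaleR_add_right)

lemma conv_diff:
  assumes "set_integrable lborel {0..t} (\<lambda>s. a (t - s) *\<^sub>R h1 s)"
    "set_integrable lborel {0..t} (\<lambda>s. a (t - s) *\<^sub>R h2 s)"
  shows "conv a (\<lambda>s. h1 s - h2 s) t = conv a h1 t - conv a h2 t"
  unfolding conv_def using set_integral_diff(2)[OF assms] by (simp add: scaleR_diff_right)

lemma conv_diff_left: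
  assumes "set_integrable lborel {0..t} (\<lambda>s. a1 (t - s) *\<^sub>R h s)"
    "set_integrable lborel {0..t} (\<lambda>s. a2 (t - s) *\<^sub>R h s)"
  shows "conv (\<lambda>x. a1 x - a2 x) h t = conv a1 h t - conv a2 h t"
  unfolding conv_def using set_integral_diff(2)[OF assms] by (simp add: scaleR_diff_left)

lemma set_integrable_sum_conv:
  assumes "\<And>i. i \<in> I \<Longrightarrow> set_integrable lborel {0..t} (\<lambda>s. a (t - s) *\<^sub>R h i s)"
  shows "set_integrable lborel {0..t} (\<lambda>s. a (t - s) *\<^sub>R (\<Sum>i\<in>I. h i s))"
proof -
  have "integrable lborel (\<lambda>s. \<Sum>i\<in>I. indicator {0..t} s *\<^sub>R (a (t - s) *\<^sub>R h i s))"
    using assms by (intro Bochner_Integration.integrable_sum) (auto simp: set_integrable_def)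
  then show ?thesis unfolding set_integrable_def by (simp add: scaleR_sum_right)
qed

lemma conv_sum:
  assumes "finite I" "\<And>i. i \<in> I \<Longrightarrow> set_integrable lborel {0..t} (\<lambda>s. a (t - s) *\<^sub>R h i s)"
  shows "conv a (\<lambda>s. \<Sum>i\<in>I. h i s) t = (\<Sum>i\<in>I. conv a (h i) t)"
  using assms
proof (induction I rule: finite_induct)
  case empty then show ?case by (simp add: conv_def)
next
  case (insert x F)
  have "conv a (\<lambda>s. \<Sum>i\<in>insert x F. h i s) t = conv a (\<lambda>s. h x s + (\<Sum>i\<in>F. h i s)) t"
    using insert by simp
  also have "\<dots> = conv a (h x) t + conv a (\<lambda>s. \<Sum>i\<in>F. h i s) t"
    by (rule conv_add) (use insert in \<open>auto intro: set_integrable_sum_conv\<close>)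
  finally show ?case using insert by simp
qed

lemma set_integrable_conv_bounded_linear:
  assumes T: "bounded_linear T" and i: "set_integrable lborel {0..t} (\<lambda>s. a (t - s) *\<^sub>R h s)"
  shows "set_integrable lborel {0..t} (\<lambda>s. a (t - s) *\<^sub>R T (h s))"
proof -
  interpret T: bounded_linear T by fact
  have "integrable lborel (\<lambda>x. T (indicator {0..t} x *\<^sub>R (a (t - x) *\<^sub>R h x)))"
    by (rule integrable_bounded_linear[OF T i[unfolded set_integrable_def]])
  then show ?thesis unfolding set_integrable_def by (simp add: T.scaleR)
qed

lemma conv_bounded_linear:
  assumes T: "bounded_linear T" and i: "set_integrable lborel {0..t} (\<lambda>s. a (t - s) *\<^sub>R h s)"
  shows "T (conv a h t) = conv a (\<lambda>s. T (h s)) t"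
proof -
  interpret T: bounded_linear T by fact
  have "T (conv a h t) = (\<integral>x. T (indicator {0..t} x *\<^sub>R (a (t - x) *\<^sub>R h x)) \<partial>lborel)"
    unfolding conv_def set_lebesgue_integral_def
    by (rule integral_bounded_linear[OF T i[unfolded set_integrable_def], symmetric])
  also have "\<dots> = conv a (\<lambda>s. T (h s)) t"
    unfolding conv_def set_lebesgue_integral_def by (simp add: T.scaleR)
  finally show ?thesis .
qed


text \<open>Both sides of \<open>(a \<star> b) \<star> h = a \<star> (b \<star> h)\<close> at time \<open>t\<close> are iterated integrals of
  the following kernel over the triangle \<open>0 \<le> s \<le> v \<le> t\<close>.\<close>

definition triangle_kernel ::
    "(real \<Rightarrow> real) \<Rightarrow> (real \<Rightarrow> real) \<Rightarrow> (real \<Rightarrow> 'a::real_vector) \<Rightarrow> real \<Rightarrow> real \<Rightarrow> real \<Rightarrow> 'a"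
  where "triangle_kernel a b h t s v =
    (if 0 \<le> s \<and> s \<le> v \<and> v \<le> t then (a (t - v) * b (v - s)) *\<^sub>R h s else 0)"

lemma triangle_kernel_measurable[measurable]:
  fixes h :: "real \<Rightarrow> 'a::euclidean_space"
  assumes [measurable]: "a \<in> borel_measurable borel" "b \<in> borel_measurable borel"
    "h \<in> borel_measurable borel"
  shows "case_prod (triangle_kernel a b h t) \<in> borel_measurable (lborel \<Otimes>\<^sub>M lborel)"
  apply (subst measurable_cong_sets[OF sets_pair_lborel refl])
  unfolding triangle_kernel_def by measurable

lemma triangle_kernel_section_bound:
  fixes h :: "real \<Rightarrow> 'a::euclidean_space"
  assumes [measurable]: "b \<in> borel_measurable borel"
    and hb: "\<And>s. s \<in> {0..t} \<Longrightarrow> norm (h s) \<le> H" and H: "0 \<le> H"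
  shows "(\<integral>\<^sup>+ s. ennreal (norm (triangle_kernel a b h t s v)) \<partial>lborel)
    \<le> indicator {0..t} v * ennreal (norm (a (t - v)))
       * ((\<integral>\<^sup>+ r. indicator {0..t} r * ennreal (norm (b r)) \<partial>lborel) * ennreal H)"
proof (cases "v \<in> {0..t}")
  case True
  have "(\<integral>\<^sup>+ s. ennreal (norm (triangle_kernel a b h t s v)) \<partial>lborel)
      \<le> (\<integral>\<^sup>+ s. ennreal (norm (a (t - v))) * ((indicator {0..v} s * ennreal (norm (b (v - s))))
            * ennreal H) \<partial>lborel)"
  proof (intro nn_integral_mono)
    fix s
    show "ennreal (norm (triangle_kernel a b h t s v))
        \<le> ennreal (norm (a (t - v))) * ((indicator {0..v} s * ennreal (norm (b (v - s)))) * ennreal H)"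
    proof (cases "0 \<le> s \<and> s \<le> v")
      case True
      with \<open>v \<in> {0..t}\<close> have "norm (h s) \<le> H" by (intro hb) auto
      then have "norm (triangle_kernel a b h t s v) \<le> norm (a (t - v)) * (norm (b (v - s)) * H)"
        using True \<open>v \<in> {0..t}\<close>
        by (auto simp: triangle_kernel_def abs_mult mult.assoc intro!: mult_left_mono)
      then show ?thesis using True H
        by (simp add: ennreal_mult'[symmetric] ennreal_mult[symmetric] ennreal_leI)
    qed (auto simp: triangle_kernel_def)
  qed
  also have "\<dots> = ennreal (norm (a (t - v)))
      * ((\<integral>\<^sup>+ s. indicator {0..v} s * ennreal (norm (b (v - s))) \<partial>lborel) * ennreal H)"
    by (simp add: nn_integral_cmult nn_integral_multc)
  also have "(\<integral>\<^sup>+ s. indicator {0..v} s * ennreal (norm (b (v - s))) \<partial>lborel)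
      = (\<integral>\<^sup>+ r. indicator {0..v} r * ennreal (norm (b r)) \<partial>lborel)"
    by (rule nn_integral_Icc_reflect) measurable
  also have "\<dots> \<le> (\<integral>\<^sup>+ r. indicator {0..t} r * ennreal (norm (b r)) \<partial>lborel)"
    using True by (intro nn_integral_mono) (auto simp: indicator_def)
  finally show ?thesis using True by (auto simp: mult_left_mono mult_right_mono)
next
  case False
  then have "triangle_kernel a b h t s v = 0" for s by (auto simp: triangle_kernel_def)
  then show ?thesis using False by simp
qed

lemma triangle_kernel_integrable:
  fixes h :: "real \<Rightarrow> 'a::euclidean_space"
  assumes [measurable]: "a \<in> borel_measurable borel" "b \<in> borel_measurable borel"
    "h \<in> borel_measurable borel"
    and ia: "set_integrable lborel {0..t} a" and ib: "set_integrable lborel {0..t} b"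
    and hb: "\<And>s. s \<in> {0..t} \<Longrightarrow> norm (h s) \<le> H" and H: "0 \<le> H"
  shows "integrable (lborel \<Otimes>\<^sub>M lborel) (case_prod (triangle_kernel a b h t))"
proof (subst integrable_iff_bounded, intro conjI)
  let ?\<Phi> = "triangle_kernel a b h t"
  show "case_prod ?\<Phi> \<in> borel_measurable (lborel \<Otimes>\<^sub>M lborel)" by measurable
  define L1 where "L1 c = (\<integral>\<^sup>+ r. indicator {0..t} r * ennreal (norm (c r)) \<partial>lborel)"
    for c :: "real \<Rightarrow> real"
  have L1_finite: "L1 c < \<infinity>" if "set_integrable lborel {0..t} c" for c
  proof -
    have "L1 c = (\<integral>\<^sup>+ x. ennreal (norm (indicator {0..t} x *\<^sub>R c x)) \<partial>lborel)"
      unfolding L1_def by (intro nn_integral_cong) (auto simp: indicator_def)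
    then show ?thesis using that unfolding set_integrable_def integrable_iff_bounded by simp
  qed
  have "(\<integral>\<^sup>+ z. ennreal (norm (case_prod ?\<Phi> z)) \<partial>(lborel \<Otimes>\<^sub>M lborel))
      = (\<integral>\<^sup>+ v. \<integral>\<^sup>+ s. ennreal (norm (?\<Phi> s v)) \<partial>lborel \<partial>lborel)"
  proof -
    have m: "(\<lambda>z. ennreal (norm (case_prod ?\<Phi> z))) \<in> borel_measurable (lborel \<Otimes>\<^sub>M lborel)"
      by measurable
    show ?thesis using lborel_pair.nn_integral_snd[OF m] by simp
  qed
  also have "\<dots> \<le> (\<integral>\<^sup>+ v. indicator {0..t} v * ennreal (norm (a (t - v))) * (L1 b * ennreal H) \<partial>lborel)"
    unfolding L1_def by (intro nn_integral_mono triangle_kernel_section_bound[OF _ hb H]) simp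
  also have "\<dots> = (\<integral>\<^sup>+ v. indicator {0..t} v * ennreal (norm (a (t - v))) \<partial>lborel) * (L1 b * ennreal H)"
    by (simp add: nn_integral_multc)
  also have "(\<integral>\<^sup>+ v. indicator {0..t} v * ennreal (norm (a (t - v))) \<partial>lborel) = L1 a"
    unfolding L1_def by (rule nn_integral_Icc_reflect) measurable
  also have "L1 a * (L1 b * ennreal H) < \<infinity>"
    using L1_finite[OF ia] L1_finite[OF ib] by (simp add: ennreal_mult_less_top)
  finally show "(\<integral>\<^sup>+ z. ennreal (norm (case_prod ?\<Phi> z)) \<partial>(lborel \<Otimes>\<^sub>M lborel)) < \<infinity>" .
qed

lemma triangle_kernel_integral_snd:
  fixes h :: "real \<Rightarrow> 'a::euclidean_space"
  shows "indicator {0..t} s *\<^sub>R (conv a b (t - s) *\<^sub>R h s)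
    = (\<integral>v. triangle_kernel a b h t s v \<partial>lborel)"
proof (cases "s \<in> {0..t}")
  case True
  have "conv a b (t - s) = (\<integral>r. indicator {0..t-s} r *\<^sub>R (a (t - s - r) *\<^sub>R b r) \<partial>lborel)"
    unfolding conv_def set_lebesgue_integral_def ..
  also have "\<dots> = (\<integral>v. indicator {0..t-s} (v - s) *\<^sub>R (a (t - s - (v - s)) *\<^sub>R b (v - s)) \<partial>lborel)"
    by (rule integral_translate)
  also have "\<dots> = (\<integral>v. (if s \<le> v \<and> v \<le> t then a (t-v) * b (v-s) else 0) \<partial>lborel)"
    by (rule Bochner_Integration.integral_cong) (auto simp: indicator_def)
  finally have "conv a b (t - s) *\<^sub>R h s
      = (\<integral>v. (if s \<le> v \<and> v \<le> t then a (t-v) * b (v-s) else 0) *\<^sub>R h s \<partial>lborel)"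
    by (simp add: integral_scaleR_left_unconditional)
  also have "\<dots> = (\<integral>v. triangle_kernel a b h t s v \<partial>lborel)"
    using True by (intro Bochner_Integration.integral_cong) (auto simp: triangle_kernel_def)
  finally show ?thesis using True by simp
next
  case False
  then have "triangle_kernel a b h t s v = 0" for v by (auto simp: triangle_kernel_def)
  then show ?thesis using False by simp
qed

lemma triangle_kernel_integral_fst:
  fixes h :: "real \<Rightarrow> 'a::euclidean_space"
  shows "indicator {0..t} v *\<^sub>R (a (t - v) *\<^sub>R conv b h v)
    = (\<integral>s. triangle_kernel a b h t s v \<partial>lborel)"
proof (cases "v \<in> {0..t}")
  case True
  have "a (t - v) *\<^sub>R conv b h v
      = (\<integral>s. a (t - v) *\<^sub>R (indicator {0..v} s *\<^sub>R (b (v - s) *\<^sub>R h s)) \<partial>lborel)"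
    unfolding conv_def set_lebesgue_integral_def integral_scaleR_right[symmetric]
    by (simp del: integral_scaleR_right)
  also have "\<dots> = (\<integral>s. triangle_kernel a b h t s v \<partial>lborel)"
    using True by (intro Bochner_Integration.integral_cong)
      (auto simp: triangle_kernel_def indicator_def)
  finally show ?thesis using True by simp
next
  case False
  then have "triangle_kernel a b h t s v = 0" for s by (auto simp: triangle_kernel_def)
  then show ?thesis using False by simp
qed

lemma conv_assoc:
  fixes h :: "real \<Rightarrow> 'a::euclidean_space"
  assumes [measurable]: "a \<in> borel_measurable borel" "b \<in> borel_measurable borel"
    "h \<in> borel_measurable borel"
    and ia: "set_integrable lborel {0..t} a" and ib: "set_integrable lborel {0..t} b"
    and hb: "\<And>s. s \<in> {0..t} \<Longrightarrow> norm (h s) \<le> H" and H: "0 \<le> H"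
  shows "conv (conv a b) h t = conv a (conv b h) t"
proof -
  let ?\<Phi> = "triangle_kernel a b h t"
  have "conv (conv a b) h t = (\<integral>s. \<integral>v. ?\<Phi> s v \<partial>lborel \<partial>lborel)"
    unfolding conv_def[of "conv a b"] set_lebesgue_integral_def
    using triangle_kernel_integral_snd[of t _ a b h] by simp
  also have "\<dots> = (\<integral>v. \<integral>s. ?\<Phi> s v \<partial>lborel \<partial>lborel)"
    using lborel_pair.Fubini_integral[OF triangle_kernel_integrable[OF _ _ _ ia ib hb H]] by simp
  also have "\<dots> = conv a (conv b h) t"
    unfolding conv_def[of a] set_lebesgue_integral_def
    using triangle_kernel_integral_fst[of t _ a b h] by simp
  finally show ?thesis .
qed


section \<open>From the master equation to a renewal equation\<close>

text \<open>Let \<open>F(x) = \<integral>\<^sub>0\<^sup>x f\<close> and \<open>g = 1 - F\<close>, and let \<open>\<kappa>\<close> solve \<open>g \<star> \<kappa> = f\<close>. For a bounded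
  \<open>c\<close>, put \<open>W = \<kappa> \<star> c\<close>; then \<open>f \<star> c = (g \<star> \<kappa>) \<star> c = g \<star> W = 1 \<star> W - f \<star> (1 \<star> W)\<close>, using
  associativity twice and \<open>F = f \<star> 1\<close>. It is the time-domain form of the Laplace-transform
  relation between \<open>\<kappa>\<close> and \<open>f\<close> stated in the paper.\<close>

lemma conv_resolvent_identity:
  fixes f \<kappa> :: "real \<Rightarrow> real" and c :: "real \<Rightarrow> 'a::euclidean_space"
  assumes fm[measurable]: "f \<in> borel_measurable borel" and fi: "set_integrable lborel {0..t} f"
    and Fb: "\<And>x. x \<in> {0..t} \<Longrightarrow> \<bar>LINT s:{0..x}|lborel. f s\<bar> \<le> 1"
    and km[measurable]: "\<kappa> \<in> borel_measurable borel" and ki: "set_integrable lborel {0..t} \<kappa>"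
    and eq: "AE \<tau> in lborel. \<tau> \<in> {0..t} \<longrightarrow> conv (\<lambda>x. 1 - (LINT s:{0..x}|lborel. f s)) \<kappa> \<tau> = f \<tau>"
    and cm[measurable]: "c \<in> borel_measurable borel"
    and cb: "\<And>s. s \<in> {0..t} \<Longrightarrow> norm (c s) \<le> H" and H: "0 \<le> H"
  shows "conv f c t = conv (\<lambda>_. 1) (conv \<kappa> c) t - conv f (conv (\<lambda>_. 1) (conv \<kappa> c)) t"
proof -
  define F where "F = (\<lambda>x. LINT s:{0..x}|lborel. f s)"
  have F_conv: "F x = conv f (\<lambda>_. 1) x" for x by (simp add: F_def conv_const)
  have Fm[measurable]: "F \<in> borel_measurable borel" unfolding F_conv[abs_def] by measurable
  define G where "G = (\<lambda>x. 1 - F x)"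
  have Gm[measurable]: "G \<in> borel_measurable borel" unfolding G_def by measurable
  have Fi: "set_integrable lborel {0..t} F"
    by (rule set_integrable_bounded_Icc[OF Fm, where H=1]) (use Fb in \<open>simp add: F_def\<close>)
  have onei: "set_integrable lborel {0..t} (\<lambda>_. 1::real)"
    by (rule set_integrable_bounded_Icc[where H=1]) auto
  have Gi: "set_integrable lborel {0..t} G"
    unfolding G_def using set_integral_diff(1)[OF onei Fi] by simp
  define W where "W = conv \<kappa> c"
  have Wm[measurable]: "W \<in> borel_measurable borel" unfolding W_def by measurable
  define HW where "HW = H * (LINT r:{0..t}|lborel. \<bar>\<kappa> r\<bar>)"
  have HW: "0 \<le> HW"
    unfolding HW_def set_lebesgue_integral_def using H by (intro mult_nonneg_nonneg integral_nonneg_AE) auto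
  have Wb: "norm (W s) \<le> HW" if "s \<in> {0..t}" for s
    unfolding W_def HW_def by (rule conv_bound_Icc[OF _ _ ki cb H that]) auto
  text \<open>The kernel equation \<open>g \<star> \<kappa> = f\<close>, read at the reflected times \<open>t - s\<close>.\<close>
  have pr: "Measurable.pred borel (\<lambda>\<tau>. 0 \<le> \<tau> \<and> \<tau> \<le> t \<longrightarrow> conv G \<kappa> \<tau> = f \<tau>)" by measurable
  have eq': "AE \<tau> in lborel. 0 \<le> \<tau> \<and> \<tau> \<le> t \<longrightarrow> conv G \<kappa> \<tau> = f \<tau>"
    using eq by (simp add: G_def F_def)
  have "AE x in lborel. 0 \<le> t + -1 * x \<and> t + -1 * x \<le> t \<longrightarrow> conv G \<kappa> (t + -1 * x) = f (t + -1 * x)"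
    by (rule AE_borel_affine[OF _ pr eq']) simp
  then have ae: "AE s in lborel. s \<in> {0..t} \<longrightarrow> f (t - s) = conv G \<kappa> (t - s)"
    by (rule AE_mp) (auto intro!: AE_I2)
  have "conv f c t = conv (conv G \<kappa>) c t" by (rule conv_cong_AE[OF _ _ _ ae]) auto
  also have "\<dots> = conv G W t" unfolding W_def by (rule conv_assoc[OF _ _ _ Gi ki cb H]) auto
  also have "\<dots> = conv (\<lambda>_. 1) W t - conv F W t" unfolding G_def
    by (rule conv_diff_left; rule conv_integrable[where H=HW]) (use onei Fi Wb in auto)
  also have "conv F W t = conv (conv f (\<lambda>_. 1)) W t" by (rule conv_cong) (simp_all add: F_conv)
  also have "\<dots> = conv f (conv (\<lambda>_. 1) W) t" by (rule conv_assoc[OF _ _ _ fi onei Wb HW]) auto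
  finally show ?thesis unfolding W_def .
qed

text \<open>Extension by zero to the left of a function given on \<open>[0, \<infinity>)\<close>: for continuous \<open>u\<close> it is
  Borel measurable and bounded on compact intervals, so it can be convolved.\<close>

definition zero_ext :: "(real \<Rightarrow> 'a::real_normed_vector) \<Rightarrow> real \<Rightarrow> 'a"
  where "zero_ext u s = indicator {0..} s *\<^sub>R u s"

lemma zero_ext_eq[simp]: "0 \<le> s \<Longrightarrow> zero_ext u s = u s"
  by (simp add: zero_ext_def)

lemma zero_ext_measurable:
  "continuous_on {0..} u \<Longrightarrow> zero_ext u \<in> borel_measurable borel"
  unfolding zero_ext_def[abs_def] by (rule borel_measurable_continuous_on_indicator) auto

lemma zero_ext_bounded:
  fixes u :: "real \<Rightarrow> 'a::real_normed_vector"
  assumes "continuous_on {0..} u" "0 \<le> t"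
  obtains M where "0 \<le> M" "\<And>s. s \<in> {0..t} \<Longrightarrow> norm (zero_ext u s) \<le> M"
proof -
  have "bounded (u ` {0..t})"
    by (rule compact_imp_bounded[OF compact_continuous_image[OF continuous_on_subset[OF assms(1)]
          compact_Icc]]) auto
  then obtain M where M: "\<forall>s\<in>{0..t}. norm (u s) \<le> M" by (auto simp: bounded_iff)
  moreover have "0 \<le> M" using M[rule_format, of 0] assms(2) by (auto intro: order_trans[OF norm_ge_zero])
  ultimately show ?thesis using that by auto
qed

text \<open>Integrating the equation gives \<open>1 \<star> W = u - u(0)\<close> for
  \<open>W = \<kappa> \<star> (B u - u)\<close>; the resolvent identity then removes \<open>\<kappa>\<close>.\<close>

lemma renewal_equation:
  fixes f \<kappa> :: "real \<Rightarrow> real" and u :: "real \<Rightarrow> 'a::euclidean_space" and B :: "'a \<Rightarrow> 'a"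
  assumes t: "0 \<le> t"
    and fm[measurable]: "f \<in> borel_measurable borel" and fi: "set_integrable lborel {0..t} f"
    and Fb: "\<And>x. x \<in> {0..t} \<Longrightarrow> \<bar>LINT s:{0..x}|lborel. f s\<bar> \<le> 1"
    and km[measurable]: "\<kappa> \<in> borel_measurable borel" and ki: "set_integrable lborel {0..t} \<kappa>"
    and eq: "AE \<tau> in lborel. \<tau> \<in> {0..t} \<longrightarrow> conv (\<lambda>x. 1 - (LINT s:{0..x}|lborel. f s)) \<kappa> \<tau> = f \<tau>"
    and Bl: "bounded_linear B"
    and ucont: "continuous_on {0..} u"
    and ud: "\<And>\<tau>. \<tau> \<in> {0..t} \<Longrightarrow>
      (u has_vector_derivative conv \<kappa> (\<lambda>s. B (u s) - u s) \<tau>) (at \<tau> within {0..})"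
  shows "u t = (1 - (LINT s:{0..t}|lborel. f s)) *\<^sub>R u 0 + conv f (\<lambda>s. B (u s)) t"
proof -
  have [measurable]: "B \<in> borel_measurable borel"
    by (rule borel_measurable_continuous_onI) (simp add: Bl linear_continuous_on)
  define v where "v = zero_ext u"
  have [measurable]: "v \<in> borel_measurable borel" unfolding v_def by (rule zero_ext_measurable[OF ucont])
  obtain M where M: "0 \<le> M" "\<And>s. s \<in> {0..t} \<Longrightarrow> norm (v s) \<le> M"
    using zero_ext_bounded[OF ucont t] unfolding v_def by blast
  have Bvb: "norm (B (v s)) \<le> onorm B * M" if "s \<in> {0..t}" for s by (rule onorm_bound[OF Bl M(2)[OF that]])
  define c where "c = (\<lambda>s. B (v s) - v s)"
  have cm[measurable]: "c \<in> borel_measurable borel" unfolding c_def by measurable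
  have Hc: "0 \<le> onorm B * M + M" using M onorm_pos_le[OF Bl] by simp
  have cb: "norm (c s) \<le> onorm B * M + M" if "s \<in> {0..t}" for s
    unfolding c_def using norm_triangle_ineq4[of "B (v s)" "v s"] Bvb[OF that] M(2)[OF that] by simp
  define W where "W = conv \<kappa> c"
  have ftc: "conv (\<lambda>_. 1) W s = u s - u 0" if s: "s \<in> {0..t}" for s
  proof -
    have "conv (\<lambda>_. 1) W s = (LINT \<tau>:{0..s}|lborel. W \<tau>)" by (simp add: conv_def)
    also have "\<dots> = u s - u 0"
    proof (rule set_integral_vector_derivative)
      show "set_integrable lborel {0..s} W"
      proof (rule set_integrable_bounded_Icc)
        show "W \<in> borel_measurable borel" unfolding W_def by measurable
        fix r assume "r \<in> {0..s}"
        then show "norm (W r) \<le> (onorm B * M + M) * (LINT r:{0..t}|lborel. \<bar>\<kappa> r\<bar>)"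
          unfolding W_def using s by (intro conv_bound_Icc[OF _ _ ki cb Hc]) auto
      qed
      fix \<tau> assume \<tau>: "\<tau> \<in> {0..s}"
      have "conv \<kappa> (\<lambda>s. B (u s) - u s) \<tau> = W \<tau>"
        unfolding W_def by (rule conv_cong) (auto simp: c_def v_def)
      then show "(u has_vector_derivative W \<tau>) (at \<tau> within {0..})" using ud[of \<tau>] \<tau> s by simp
    qed (use s in simp)
    finally show ?thesis .
  qed
  have int_f: "set_integrable lborel {0..t} (\<lambda>s. f (t - s) *\<^sub>R h s)"
    if "h \<in> borel_measurable borel" "\<And>s. s \<in> {0..t} \<Longrightarrow> norm (h s) \<le> H" for h :: "real \<Rightarrow> 'a" and H
    by (rule conv_integrable[OF fm that(1) fi that(2)])
  have "conv f c t = conv (\<lambda>_. 1) W t - conv f (conv (\<lambda>_. 1) W) t"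
    unfolding W_def by (rule conv_resolvent_identity[OF fm fi Fb km ki eq cm cb Hc])
  also have "conv f (conv (\<lambda>_. 1) W) t = conv f (\<lambda>s. v s - u 0) t"
    by (rule conv_cong) (auto simp: ftc v_def)
  also have "\<dots> = conv f v t - (LINT s:{0..t}|lborel. f s) *\<^sub>R u 0"
    using conv_diff[OF int_f int_f, of v M "\<lambda>_. u 0" "norm (u 0)"] M(2) by (simp add: conv_const)
  finally have "conv f c t = u t - u 0 - conv f v t + (LINT s:{0..t}|lborel. f s) *\<^sub>R u 0"
    using ftc[of t] t by simp
  moreover have "conv f c t = conv f (\<lambda>s. B (v s)) t - conv f v t"
    unfolding c_def
    by (rule conv_diff[OF int_f[of _ "onorm B * M"] int_f[of _ M]]) (use M(2) Bvb in auto)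
  moreover have "conv f (\<lambda>s. B (u s)) t = conv f (\<lambda>s. B (v s)) t"
    by (rule conv_cong) (auto simp: v_def)
  ultimately show ?thesis by (simp add: algebra_simps)
qed

section \<open>Complete positivity on \<open>M\<^sub>d\<close>\<close>

lemma complex_scaleR_eq_mult: "r *\<^sub>R (z::complex) = of_real r * z"
  by (simp add: scaleR_conv_of_real)

lemma cmat_scale_of_real: "cmat_scale (of_real r) X = r *\<^sub>R X"
  unfolding cmat_scale_def by (simp add: vec_eq_iff complex_scaleR_eq_mult)

lemma cmat_scale_add: "cmat_scale c (X + Y) = cmat_scale c X + cmat_scale c Y"
  by (simp add: cmat_scale_def vec_eq_iff algebra_simps)

lemma cmat_scale_scaleR: "cmat_scale c (r *\<^sub>R X) = r *\<^sub>R cmat_scale c X"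
  unfolding cmat_scale_def by (simp add: vec_eq_iff complex_scaleR_eq_mult algebra_simps)

lemma bounded_linear_cmat_scale: "bounded_linear (cmat_scale c :: 'd::finite cmat \<Rightarrow> _)"
  by (rule linear_conv_bounded_linear[THEN iffD1], rule linearI)
     (simp_all add: cmat_scale_add cmat_scale_scaleR)

text \<open>Complex-linear maps on the finite-dimensional space \<open>M\<^sub>d\<close> are bounded; this makes them
  commute with integrals and limits.\<close>

lemma bounded_linear_cmat_linear:
  assumes "cmat_linear (T :: 'd::finite cmat \<Rightarrow> _)"
  shows "bounded_linear T"
proof -
  have "T (r *\<^sub>R X) = r *\<^sub>R T X" for r X
    using assms unfolding cmat_linear_def by (metis cmat_scale_of_real)
  then show ?thesis using assms unfolding cmat_linear_def
    by (intro linear_conv_bounded_linear[THEN iffD1] linearI) auto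
qed

definition block_entry :: "(nat \<Rightarrow> complex ^ 'd) \<Rightarrow> nat \<Rightarrow> nat \<Rightarrow> 'd::finite cmat \<Rightarrow> complex"
  where "block_entry v i j Y = (\<Sum>a\<in>UNIV. cnj (v i $ a) * ((Y *v v j) $ a))"

lemma block_positive_iff:
  "block_positive k X \<longleftrightarrow> (\<forall>v. nonneg_complex (\<Sum>i<k. \<Sum>j<k. block_entry v i j (X i j)))"
  by (simp add: block_positive_def block_entry_def)

lemma block_entry_add: "block_entry v i j (X + Y) = block_entry v i j X + block_entry v i j Y"
  by (simp add: block_entry_def matrix_vector_mult_def sum.distrib algebra_simps sum_distrib_left)

lemma block_entry_scaleR: "block_entry v i j (r *\<^sub>R X) = of_real r * block_entry v i j X"
  unfolding block_entry_def matrix_vector_mult_def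
  by (simp add: complex_scaleR_eq_mult sum_distrib_left algebra_simps)

lemma bounded_linear_block_entry: "bounded_linear (block_entry v i j)"
proof (rule linear_conv_bounded_linear[THEN iffD1], rule linearI)
  show "block_entry v i j (r *\<^sub>R b) = r *\<^sub>R block_entry v i j b" for r b
    by (simp only: block_entry_scaleR) (simp add: complex_scaleR_eq_mult)
qed (simp add: block_entry_add)

lemma nonneg_complex_add: "nonneg_complex a \<Longrightarrow> nonneg_complex b \<Longrightarrow> nonneg_complex (a + b)"
  by (simp add: nonneg_complex_def)

lemma nonneg_complex_scale: "0 \<le> r \<Longrightarrow> nonneg_complex a \<Longrightarrow> nonneg_complex (of_real r * a)"
  by (simp add: nonneg_complex_def)

lemma conv_nonneg_complex:
  fixes h :: "real \<Rightarrow> complex"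
  assumes "\<And>x. 0 \<le> a x" "\<And>s. s \<in> {0..t} \<Longrightarrow> nonneg_complex (h s)"
    and i: "set_integrable lborel {0..t} (\<lambda>s. a (t - s) *\<^sub>R h s)"
  shows "nonneg_complex (conv a h t)"
proof -
  have "Re (conv a h t) = conv a (\<lambda>s. Re (h s)) t"
    by (rule conv_bounded_linear[OF bounded_linear_Re i])
  also have "\<dots> \<ge> 0" unfolding conv_def set_lebesgue_integral_def
    using assms by (intro integral_nonneg_AE AE_I2) (auto simp: nonneg_complex_def indicator_def)
  finally have "Re (conv a h t) \<ge> 0" .
  moreover have "Im (conv a h t) = conv a (\<lambda>s. Im (h s)) t"
    by (rule conv_bounded_linear[OF bounded_linear_Im i])
  moreover have "\<dots> = conv a (\<lambda>s. 0) t"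
    by (rule conv_cong) (use assms in \<open>auto simp: nonneg_complex_def\<close>)
  ultimately show ?thesis by (simp add: nonneg_complex_def conv_def)
qed

lemma completely_positive_id: "completely_positive (\<lambda>X. X)"
  unfolding completely_positive_def cmat_linear_def by auto

lemma completely_positive_comp:
  "completely_positive S \<Longrightarrow> completely_positive T \<Longrightarrow> completely_positive (\<lambda>X. S (T X))"
  unfolding completely_positive_def cmat_linear_def by auto

text \<open>Complete positivity is closed under pointwise limits of linear maps: each quadratic form
  depends continuously on the map and the nonnegative reals are closed.\<close>

lemma completely_positive_limit:
  fixes L :: "'d::finite cmat \<Rightarrow> 'd cmat"
  assumes cp: "\<And>n. completely_positive (H n)" and lim: "\<And>X. (\<lambda>n. H n X) \<longlonglongrightarrow> L X"
    and lin: "cmat_linear L"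
  shows "completely_positive L"
  unfolding completely_positive_def
proof (intro conjI lin allI impI)
  fix k and X :: "nat \<Rightarrow> nat \<Rightarrow> 'd cmat" assume bp: "block_positive k X"
  show "block_positive k (\<lambda>i j. L (X i j))" unfolding block_positive_iff
  proof
    fix v
    let ?q = "\<lambda>T :: 'd cmat \<Rightarrow> 'd cmat. \<Sum>i<k. \<Sum>j<k. block_entry v i j (T (X i j))"
    have nn: "nonneg_complex (?q (H n))" for n
      using cp[of n] bp unfolding completely_positive_def block_positive_iff by blast
    have l: "(\<lambda>n. ?q (H n)) \<longlonglongrightarrow> ?q L"
      by (intro tendsto_sum bounded_linear.tendsto[OF bounded_linear_block_entry] lim)
    have "(\<lambda>n. Im (?q (H n))) \<longlonglongrightarrow> Im (?q L)" by (rule tendsto_Im[OF l])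
    moreover have "(\<lambda>n. Im (?q (H n))) = (\<lambda>n. 0)" using nn by (simp add: nonneg_complex_def)
    ultimately have "Im (?q L) = 0" using LIMSEQ_unique[of "\<lambda>n. 0::real"] by auto
    moreover have "0 \<le> Re (?q L)"
      by (rule LIMSEQ_le_const[OF tendsto_Re[OF l]]) (use nn in \<open>auto simp: nonneg_complex_def\<close>)
    ultimately show "nonneg_complex (?q L)" by (simp add: nonneg_complex_def)
  qed
qed

lemma cmat_linear_affine_conv:
  fixes \<Phi> :: "real \<Rightarrow> 'd::finite cmat \<Rightarrow> 'd cmat"
  assumes lin: "\<And>s. s \<in> {0..t} \<Longrightarrow> cmat_linear (\<Phi> s)"
    and int: "\<And>X. set_integrable lborel {0..t} (\<lambda>s. a (t - s) *\<^sub>R \<Phi> s X)"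
  shows "cmat_linear (\<lambda>X. c *\<^sub>R X + conv a (\<lambda>s. \<Phi> s X) t)"
  unfolding cmat_linear_def
proof (intro conjI allI)
  fix X Y
  have "conv a (\<lambda>s. \<Phi> s (X + Y)) t = conv a (\<lambda>s. \<Phi> s X + \<Phi> s Y) t"
    by (rule conv_cong) (use lin in \<open>auto simp: cmat_linear_def\<close>)
  also have "\<dots> = conv a (\<lambda>s. \<Phi> s X) t + conv a (\<lambda>s. \<Phi> s Y) t" by (rule conv_add[OF int int])
  finally show "c *\<^sub>R (X + Y) + conv a (\<lambda>s. \<Phi> s (X + Y)) t
      = c *\<^sub>R X + conv a (\<lambda>s. \<Phi> s X) t + (c *\<^sub>R Y + conv a (\<lambda>s. \<Phi> s Y) t)"
    by (simp add: algebra_simps)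
next
  fix z X
  have "conv a (\<lambda>s. \<Phi> s (cmat_scale z X)) t = conv a (\<lambda>s. cmat_scale z (\<Phi> s X)) t"
    by (rule conv_cong) (use lin in \<open>auto simp: cmat_linear_def\<close>)
  also have "\<dots> = cmat_scale z (conv a (\<lambda>s. \<Phi> s X) t)"
    by (rule conv_bounded_linear[OF bounded_linear_cmat_scale int, symmetric])
  finally show "c *\<^sub>R cmat_scale z X + conv a (\<lambda>s. \<Phi> s (cmat_scale z X)) t
      = cmat_scale z (c *\<^sub>R X + conv a (\<lambda>s. \<Phi> s X) t)"
    by (simp add: cmat_scale_add cmat_scale_scaleR)
qed

lemma completely_positive_affine_conv:
  fixes \<Phi> :: "real \<Rightarrow> 'd::finite cmat \<Rightarrow> 'd cmat"
  assumes c: "0 \<le> c" and a: "\<And>x. 0 \<le> a x"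
    and cp: "\<And>s. s \<in> {0..t} \<Longrightarrow> completely_positive (\<Phi> s)"
    and int: "\<And>X. set_integrable lborel {0..t} (\<lambda>s. a (t - s) *\<^sub>R \<Phi> s X)"
  shows "completely_positive (\<lambda>X. c *\<^sub>R X + conv a (\<lambda>s. \<Phi> s X) t)"
  unfolding completely_positive_def
proof (intro conjI allI impI)
  show "cmat_linear (\<lambda>X. c *\<^sub>R X + conv a (\<lambda>s. \<Phi> s X) t)"
    by (rule cmat_linear_affine_conv[OF _ int]) (use cp in \<open>simp add: completely_positive_def\<close>)
  fix n and Xs :: "nat \<Rightarrow> nat \<Rightarrow> 'd cmat" assume bp: "block_positive n Xs"
  show "block_positive n (\<lambda>i j. c *\<^sub>R Xs i j + conv a (\<lambda>s. \<Phi> s (Xs i j)) t)"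
    unfolding block_positive_iff
  proof
    fix v
    define I where "I = {..<n} \<times> {..<n}"
    have pairs: "(\<Sum>i<n. \<Sum>j<n. w i j) = (\<Sum>p\<in>I. w (fst p) (snd p))" for w :: "nat \<Rightarrow> nat \<Rightarrow> complex"
      unfolding I_def by (simp add: sum.cartesian_product case_prod_beta)
    define q where "q = (\<lambda>s p. block_entry v (fst p) (snd p) (\<Phi> s (Xs (fst p) (snd p))))"
    have ints: "set_integrable lborel {0..t} (\<lambda>s. a (t - s) *\<^sub>R q s p)" for p
      unfolding q_def by (rule set_integrable_conv_bounded_linear[OF bounded_linear_block_entry int])
    have entry: "block_entry v i j (c *\<^sub>R Xs i j + conv a (\<lambda>s. \<Phi> s (Xs i j)) t)
        = of_real c * block_entry v i j (Xs i j) + conv a (\<lambda>s. block_entry v i j (\<Phi> s (Xs i j))) t"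
      for i j
      using conv_bounded_linear[OF bounded_linear_block_entry int]
      by (simp add: block_entry_add block_entry_scaleR)
    have "(\<Sum>i<n. \<Sum>j<n. block_entry v i j (c *\<^sub>R Xs i j + conv a (\<lambda>s. \<Phi> s (Xs i j)) t))
        = of_real c * (\<Sum>i<n. \<Sum>j<n. block_entry v i j (Xs i j)) + (\<Sum>p\<in>I. conv a (\<lambda>s. q s p) t)"
      by (simp only: entry sum.distrib sum_distrib_left pairs q_def)
    also have "(\<Sum>p\<in>I. conv a (\<lambda>s. q s p) t) = conv a (\<lambda>s. \<Sum>p\<in>I. q s p) t"
      by (rule conv_sum[symmetric]) (auto simp: I_def ints)
    finally have decomp: "(\<Sum>i<n. \<Sum>j<n. block_entry v i j (c *\<^sub>R Xs i j + conv a (\<lambda>s. \<Phi> s (Xs i j)) t))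
        = of_real c * (\<Sum>i<n. \<Sum>j<n. block_entry v i j (Xs i j)) + conv a (\<lambda>s. \<Sum>p\<in>I. q s p) t" .
    have "nonneg_complex (\<Sum>p\<in>I. q s p)" if "s \<in> {0..t}" for s
    proof -
      have "block_positive n (\<lambda>i j. \<Phi> s (Xs i j))"
        using cp[OF that] bp by (simp add: completely_positive_def)
      then show ?thesis unfolding block_positive_iff pairs q_def by blast
    qed
    then have "nonneg_complex (conv a (\<lambda>s. \<Sum>p\<in>I. q s p) t)"
      by (intro conv_nonneg_complex[OF a] set_integrable_sum_conv ints)
    moreover have "nonneg_complex (of_real c * (\<Sum>i<n. \<Sum>j<n. block_entry v i j (Xs i j)))"
      using bp c by (intro nonneg_complex_scale) (auto simp: block_positive_iff)
    ultimately show "nonneg_complex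
        (\<Sum>i<n. \<Sum>j<n. block_entry v i j (c *\<^sub>R Xs i j + conv a (\<lambda>s. \<Phi> s (Xs i j)) t))"
      unfolding decomp by (simp add: nonneg_complex_add)
  qed
qed


section \<open>Picard iteration of the renewal equation\<close>

text \<open>If \<open>|h(s)| \<le> C e\<^sup>\<lambda>\<^sup>s\<close> then \<open>|(f \<star> h)(t)| \<le> C e\<^sup>\<lambda>\<^sup>t \<integral>\<^sub>0\<^sup>t f(r) e\<^sup>-\<^sup>\<lambda>\<^sup>r dr\<close>: in the norm
  \<open>sup e\<^sup>-\<^sup>\<lambda>\<^sup>s |h(s)|\<close>, convolution with \<open>f\<close> has norm at most \<open>\<integral> f e\<^sup>-\<^sup>\<lambda>\<^sup>r\<close>.\<close>

lemma conv_exp_weighted_bound: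
  fixes h :: "real \<Rightarrow> 'a::{banach,second_countable_topology}"
  assumes fm[measurable]: "f \<in> borel_measurable borel" and fnn: "\<And>x. 0 \<le> f x"
    and fi: "set_integrable lborel {0..t} f"
    and hm[measurable]: "h \<in> borel_measurable borel"
    and hb: "\<And>s. s \<in> {0..t} \<Longrightarrow> norm (h s) \<le> C * exp (l * s)"
    and C: "0 \<le> C" and l: "0 \<le> l"
  shows "norm (conv f h t) \<le> C * exp (l * t) * (LINT r:{0..t}|lborel. f r * exp (- (l * r)))"
proof -
  have "norm (conv f h t) \<le> (LINT s:{0..t}|lborel. \<bar>f (t - s)\<bar> * (C * exp (l * s)))"
  proof (rule conv_norm_le[OF _ _ _ fi hb, where H="C * exp (l * t)"])
    fix s assume "s \<in> {0..t}"
    then have "l * s \<le> l * t" using l by (intro mult_left_mono) auto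
    then show "C * exp (l * s) \<le> C * exp (l * t)" using C by (intro mult_left_mono) auto
  qed auto
  also have "\<dots> = (LINT s:{0..t}|lborel. (C * exp (l * t)) * (f (t - s) * exp (- (l * (t - s)))))"
  proof (rule set_lebesgue_integral_cong, simp, intro allI impI)
    fix s
    have "exp (l * s) = exp (l * t) * exp (- (l * (t - s)))"
      by (simp add: exp_add[symmetric] algebra_simps)
    then show "\<bar>f (t - s)\<bar> * (C * exp (l * s)) = (C * exp (l * t)) * (f (t - s) * exp (- (l * (t - s))))"
      using fnn[of "t - s"] by simp
  qed
  also have "\<dots> = C * exp (l * t) * (LINT s:{0..t}|lborel. f (t - s) * exp (- (l * (t - s))))"
    by simp
  also have "\<dots> = C * exp (l * t) * (LINT r:{0..t}|lborel. f r * exp (- (l * r)))"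
    using set_integral_reflect[where a="\<lambda>r. f r * exp (- (l * r))"] by simp
  finally show ?thesis .
qed

text \<open>For any integrable \<open>f \<ge> 0\<close> the weight \<open>\<lambda>\<close> can be chosen so large that
  \<open>K \<integral>\<^sub>0\<^sup>T f(r) e\<^sup>-\<^sup>\<lambda>\<^sup>r dr \<le> 1/2\<close> (dominated convergence as \<open>\<lambda> \<rightarrow> \<infinity>\<close>).\<close>

lemma exists_contraction_weight:
  fixes f :: "real \<Rightarrow> real"
  assumes fm[measurable]: "f \<in> borel_measurable borel" and fnn: "\<And>x. 0 \<le> f x"
    and fi: "set_integrable lborel {0..T} f"
  shows "\<exists>l>0. K * (LINT r:{0..T}|lborel. f r * exp (- (l * r))) \<le> 1/2"
proof -
  define s where "s = (\<lambda>(n::nat) r. indicator {0..T} r *\<^sub>R (f r * exp (- real n * r)))"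
  have ms: "\<And>n. s n \<in> borel_measurable lborel" unfolding s_def by measurable
  have bnd: "\<And>n. AE x in lborel. norm (s n x) \<le> indicator {0..T} x *\<^sub>R f x"
  proof (rule AE_I2)
    fix n x
    show "norm (s n x) \<le> indicator {0..T} x *\<^sub>R f x"
    proof (cases "x \<in> {0..T}")
      case True
      then have "exp (- real n * x) \<le> 1" by simp
      then show ?thesis using True fnn[of x] by (simp add: s_def abs_mult mult_left_le)
    qed (simp add: s_def)
  qed
  have ae: "AE x in lborel. (\<lambda>n. s n x) \<longlonglongrightarrow> 0"
  proof (rule AE_mp[OF AE_lborel_singleton[of 0]], rule AE_I2, intro impI)
    fix x :: real assume "x \<noteq> 0"
    show "(\<lambda>n. s n x) \<longlonglongrightarrow> 0"
    proof (cases "x \<in> {0..T}")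
      case True
      with \<open>x \<noteq> 0\<close> have x: "x > 0" by auto
      have e: "exp (- (real n * x)) = exp (- x) ^ n" for n
        using exp_of_nat_mult[of n "-x"] by simp
      have "(\<lambda>n. exp (- x) ^ n) \<longlonglongrightarrow> 0" by (rule LIMSEQ_power_zero) (use x in simp)
      then have "(\<lambda>n. f x * exp (- x) ^ n) \<longlonglongrightarrow> f x * 0" by (intro tendsto_mult tendsto_const)
      then show ?thesis using True by (simp add: s_def e)
    qed (simp add: s_def)
  qed
  have w: "integrable lborel (\<lambda>r. indicator {0..T} r *\<^sub>R f r)"
    using fi by (simp add: set_integrable_def)
  have m0: "(\<lambda>r. 0::real) \<in> borel_measurable lborel" by simp
  have "(\<lambda>n. integral\<^sup>L lborel (s n)) \<longlonglongrightarrow> integral\<^sup>L lborel (\<lambda>r. 0::real)"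
    using Bochner_Integration.integral_dominated_convergence[OF m0 ms w _ bnd] ae by simp
  then have "(\<lambda>n. K * integral\<^sup>L lborel (s n)) \<longlonglongrightarrow> K * 0" by (intro tendsto_mult tendsto_const) simp
  then have "eventually (\<lambda>n. K * integral\<^sup>L lborel (s n) < 1/2) sequentially"
    by (rule order_tendstoD) simp
  then obtain N where N: "\<And>n. n \<ge> N \<Longrightarrow> K * integral\<^sup>L lborel (s n) < 1/2"
    by (auto simp: eventually_sequentially)
  show ?thesis
  proof (intro exI conjI)
    show "real (Suc N) > 0" by simp
    have "K * integral\<^sup>L lborel (s (Suc N)) < 1/2" by (rule N) simp
    then show "K * (LINT r:{0..T}|lborel. f r * exp (- (real (Suc N) * r))) \<le> 1/2"
      by (simp add: s_def set_lebesgue_integral_def)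
  qed
qed

fun picard :: "(real \<Rightarrow> real) \<Rightarrow> ('a::euclidean_space \<Rightarrow> 'a) \<Rightarrow> nat \<Rightarrow> real \<Rightarrow> 'a \<Rightarrow> 'a" where
  "picard f B 0 t X = X"
| "picard f B (Suc k) t X = (1 - (LINT s:{0..t}|lborel. f s)) *\<^sub>R X + conv f (\<lambda>s. B (picard f B k s X)) t"

locale subprob_density =
  fixes f :: "real \<Rightarrow> real"
  assumes f_measurable[measurable]: "f \<in> borel_measurable borel"
    and f_nonneg: "\<And>x. 0 \<le> f x"
    and f_integrable: "\<And>T. set_integrable lborel {0..T} f"
    and f_mass_le_1: "\<And>T. (LINT s:{0..T}|lborel. f s) \<le> 1"
begin

lemma mass_measurable[measurable]: "(\<lambda>t. LINT s:{0..t}|lborel. f s) \<in> borel_measurable borel"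
proof -
  have "(\<lambda>t. LINT s:{0..t}|lborel. f s) = conv f (\<lambda>_. 1)" by (simp add: fun_eq_iff conv_const)
  then show ?thesis by simp
qed

lemma weighted_integrable:
  assumes l: "0 \<le> l"
  shows "set_integrable lborel {0..T} (\<lambda>r. f r * exp (- (l * r)))"
  unfolding set_integrable_def
proof (rule Bochner_Integration.integrable_bound[OF f_integrable[of T, unfolded set_integrable_def]])
  show "(\<lambda>x. indicat_real {0..T} x *\<^sub>R (f x * exp (- (l * x)))) \<in> borel_measurable lborel"
    by measurable
  show "AE x in lborel. norm (indicat_real {0..T} x *\<^sub>R (f x * exp (- (l * x))))
      \<le> norm (indicat_real {0..T} x *\<^sub>R f x)"
  proof (rule AE_I2)
    fix x
    show "norm (indicat_real {0..T} x *\<^sub>R (f x * exp (- (l * x)))) \<le> norm (indicat_real {0..T} x *\<^sub>R f x)"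
    proof (cases "x \<in> {0..T}")
      case True
      then have "exp (- (l * x)) \<le> 1" using l by simp
      then show ?thesis using True f_nonneg[of x] by (simp add: abs_mult mult_left_le)
    qed simp
  qed
qed

lemma mass_nonneg: "0 \<le> (LINT s:{0..T}|lborel. f s)"
  unfolding set_lebesgue_integral_def by (intro integral_nonneg_AE AE_I2) (simp add: f_nonneg)

context
  fixes B :: "'a::euclidean_space \<Rightarrow> 'a"
  assumes B_bounded_linear: "bounded_linear B"
begin

lemma B_measurable[measurable]: "B \<in> borel_measurable borel"
  by (rule borel_measurable_continuous_onI) (simp add: B_bounded_linear linear_continuous_on)

lemma picard_measurable[measurable]: "(\<lambda>s. picard f B k s X) \<in> borel_measurable borel"
proof (induction k arbitrary: X)
  case (Suc k)
  have [measurable]: "(\<lambda>s. picard f B k s Y) \<in> borel_measurable borel" for Y by (rule Suc.IH)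
  show ?case by simp
qed simp

lemma picard_bounded: "\<exists>M\<ge>0. \<forall>s\<in>{0..T}. norm (picard f B k s X) \<le> M"
proof (induction k arbitrary: X)
  case 0 then show ?case by (intro exI[of _ "norm X"]) auto
next
  case (Suc k)
  obtain M where M: "M \<ge> 0" "\<And>s. s \<in> {0..T} \<Longrightarrow> norm (picard f B k s X) \<le> M"
    using Suc.IH by blast
  define K where "K = onorm B"
  have K: "0 \<le> K" unfolding K_def by (rule onorm_pos_le[OF B_bounded_linear])
  show ?case
  proof (intro exI[of _ "norm X + K * M"] conjI ballI)
    show "0 \<le> norm X + K * M" using M K by simp
    fix s assume s: "s \<in> {0..T}"
    have "norm (conv f (\<lambda>r. B (picard f B k r X)) s) \<le> (K * M) * (LINT r:{0..s}|lborel. \<bar>f r\<bar>)"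
      by (rule conv_bound[OF _ _ f_integrable])
         (use s in \<open>auto simp: K_def intro!: onorm_bound[OF B_bounded_linear] M(2)\<close>)
    also have "\<dots> \<le> K * M" using f_mass_le_1[of s] f_nonneg M K by (simp add: mult_left_le)
    finally have "norm (conv f (\<lambda>r. B (picard f B k r X)) s) \<le> K * M" .
    moreover have "norm ((1 - (LINT r:{0..s}|lborel. f r)) *\<^sub>R X) \<le> norm X"
      using f_mass_le_1[of s] mass_nonneg[of s] by (simp add: mult_left_le_one_le)
    ultimately show "norm (picard f B (Suc k) s X) \<le> norm X + K * M"
      by (simp add: norm_triangle_le)
  qed
qed

lemma picard_integrable:
  "set_integrable lborel {0..t} (\<lambda>s. f (t - s) *\<^sub>R B (picard f B k s X))"
proof -
  obtain M where M: "\<And>s. s \<in> {0..t} \<Longrightarrow> norm (picard f B k s X) \<le> M"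
    using picard_bounded by blast
  show ?thesis
    by (rule conv_integrable[OF _ _ f_integrable, where H="onorm B * M"])
       (use M in \<open>auto intro!: onorm_bound[OF B_bounded_linear]\<close>)
qed

lemma picard_error_recursion:
  fixes u :: "real \<Rightarrow> 'a"
  assumes ucont: "continuous_on {0..} u"
    and ren: "\<And>t. 0 \<le> t \<Longrightarrow> u t = (1 - (LINT s:{0..t}|lborel. f s)) *\<^sub>R u 0 + conv f (\<lambda>s. B (u s)) t"
    and t: "0 \<le> t"
  shows "u t - picard f B (Suc k) t (u 0) = conv f (\<lambda>s. B (zero_ext u s - picard f B k s (u 0))) t"
proof -
  have [measurable]: "zero_ext u \<in> borel_measurable borel" by (rule zero_ext_measurable[OF ucont])
  obtain M where M: "\<And>s. s \<in> {0..t} \<Longrightarrow> norm (zero_ext u s) \<le> M"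
    using zero_ext_bounded[OF ucont t] by blast
  have "u t - picard f B (Suc k) t (u 0)
      = conv f (\<lambda>s. B (zero_ext u s)) t - conv f (\<lambda>s. B (picard f B k s (u 0))) t"
    using ren[OF t] conv_cong[of t f f "\<lambda>s. B (u s)" "\<lambda>s. B (zero_ext u s)"] by simp
  also have "\<dots> = conv f (\<lambda>s. B (zero_ext u s - picard f B k s (u 0))) t"
    by (subst conv_diff[symmetric, OF conv_integrable[OF _ _ f_integrable, where H="onorm B * M"]
          picard_integrable])
       (use M in \<open>auto intro!: onorm_bound[OF B_bounded_linear]
             simp: linear_diff[OF bounded_linear.linear[OF B_bounded_linear]]\<close>)
  finally show ?thesis .
qed

lemma picard_error_bound:
  fixes u :: "real \<Rightarrow> 'a"
  assumes ucont: "continuous_on {0..} u"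
    and ren: "\<And>t. 0 \<le> t \<Longrightarrow> u t = (1 - (LINT s:{0..t}|lborel. f s)) *\<^sub>R u 0 + conv f (\<lambda>s. B (u s)) t"
    and l: "0 \<le> l" "onorm B * (LINT r:{0..T}|lborel. f r * exp (- (l * r))) \<le> 1/2"
    and N: "\<And>s. s \<in> {0..T} \<Longrightarrow> norm (u s - u 0) \<le> N"
    and s: "s \<in> {0..T}"
  shows "norm (u s - picard f B k s (u 0)) \<le> N * (1/2)^k * exp (l * s)"
  using s
proof (induction k arbitrary: s)
  case 0
  have "0 \<le> N" using N[OF 0] norm_ge_zero order_trans by blast
  moreover have "1 \<le> exp (l * s)" using l 0 by simp
  ultimately have "N \<le> N * exp (l * s)" by (simp add: mult_le_cancel_left1)
  then show ?case using N[OF 0] by simp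
next
  case (Suc k t)
  have [measurable]: "zero_ext u \<in> borel_measurable borel" by (rule zero_ext_measurable[OF ucont])
  have N0: "0 \<le> N" using N[OF Suc.prems] norm_ge_zero order_trans by blast
  define C where "C = onorm B * (N * (1/2)^k)"
  have C: "C \<ge> 0" using onorm_pos_le[OF B_bounded_linear] N0 by (simp add: C_def)
  have error_step: "u t - picard f B (Suc k) t (u 0)
      = conv f (\<lambda>s. B (zero_ext u s - picard f B k s (u 0))) t"
    using picard_error_recursion[OF ucont ren] Suc.prems by simp
  have "norm (u t - picard f B (Suc k) t (u 0))
      \<le> C * exp (l * t) * (LINT r:{0..t}|lborel. f r * exp (- (l * r)))"
    unfolding error_step
  proof (rule conv_exp_weighted_bound[OF f_measurable f_nonneg f_integrable _ _ C l(1)])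
    fix s assume s: "s \<in> {0..t}"
    then have "s \<in> {0..T}" using Suc.prems by auto
    then have "norm (zero_ext u s - picard f B k s (u 0)) \<le> N * (1/2)^k * exp (l * s)"
      using Suc.IH s by simp
    then show "norm (B (zero_ext u s - picard f B k s (u 0))) \<le> C * exp (l * s)"
      using onorm_bound[OF B_bounded_linear] by (simp add: C_def mult.assoc)
  qed measurable
  also have "\<dots> \<le> C * exp (l * t) * (LINT r:{0..T}|lborel. f r * exp (- (l * r)))"
  proof -
    have "(LINT r:{0..t}|lborel. \<bar>f r * exp (- (l * r))\<bar>) \<le> (LINT r:{0..T}|lborel. \<bar>f r * exp (- (l * r))\<bar>)"
      by (rule set_integral_abs_mono[OF _ _ weighted_integrable[OF l(1)]]) (use Suc.prems in auto)
    then show ?thesis using C f_nonneg by (intro mult_left_mono) (simp_all add: abs_mult)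
  qed
  also have "\<dots> = N * (1/2)^k * exp (l * t) * (onorm B * (LINT r:{0..T}|lborel. f r * exp (- (l * r))))"
    by (simp add: C_def mult_ac)
  also have "\<dots> \<le> N * (1/2)^k * exp (l * t) * (1/2)"
    using l(2) N0 by (intro mult_left_mono) auto
  finally show ?case by (simp add: mult_ac)
qed

lemma picard_tendsto:
  fixes u :: "real \<Rightarrow> 'a"
  assumes ucont: "continuous_on {0..} u"
    and ren: "\<And>t. 0 \<le> t \<Longrightarrow> u t = (1 - (LINT s:{0..t}|lborel. f s)) *\<^sub>R u 0 + conv f (\<lambda>s. B (u s)) t"
    and T: "0 \<le> T"
  shows "(\<lambda>k. picard f B k T (u 0)) \<longlonglongrightarrow> u T"
proof -
  obtain l where l: "l > 0" "onorm B * (LINT r:{0..T}|lborel. f r * exp (- (l * r))) \<le> 1/2"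
    using exists_contraction_weight[OF f_measurable f_nonneg f_integrable] by blast
  have "bounded ((\<lambda>s. u s - u 0) ` {0..T})"
    by (rule compact_imp_bounded[OF compact_continuous_image])
       (auto intro!: continuous_intros continuous_on_subset[OF ucont])
  then obtain N where N: "\<forall>s\<in>{0..T}. norm (u s - u 0) \<le> N"
    by (auto simp: bounded_iff)
  have "(\<lambda>k. picard f B k T (u 0) - u T) \<longlonglongrightarrow> 0"
  proof (rule Lim_null_comparison)
    have "norm (u T - picard f B k T (u 0)) \<le> N * (1/2)^k * exp (l * T)" for k
      by (rule picard_error_bound[OF ucont ren _ l(2) N[rule_format]]) (use l T in auto)
    then show "\<forall>\<^sub>F k in sequentially. norm (picard f B k T (u 0) - u T) \<le> N * exp (l * T) * (1/2)^k"
      by (simp add: norm_minus_commute mult_ac)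
    show "(\<lambda>k. N * exp (l * T) * (1/2::real)^k) \<longlonglongrightarrow> 0"
      by (rule tendsto_mult_right_zero) (rule LIMSEQ_power_zero, simp)
  qed
  then show ?thesis by (simp add: Lim_null[symmetric])
qed

end

lemma picard_completely_positive:
  assumes B: "completely_positive B" and t: "0 \<le> t"
  shows "completely_positive (picard f B k t)"
  using t
proof (induction k arbitrary: t)
  case 0 then show ?case using completely_positive_id by (simp add: fun_eq_iff[symmetric])
next
  case (Suc k)
  have Bl: "bounded_linear B" using B by (simp add: completely_positive_def bounded_linear_cmat_linear)
  have "completely_positive (\<lambda>X. (1 - (LINT s:{0..t}|lborel. f s)) *\<^sub>R X
      + conv f (\<lambda>s. B (picard f B k s X)) t)"
  proof (rule completely_positive_affine_conv[OF _ f_nonneg])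
    show "0 \<le> 1 - (LINT s:{0..t}|lborel. f s)" using f_mass_le_1[of t] by simp
    show "completely_positive (\<lambda>X. B (picard f B k s X))" if "s \<in> {0..t}" for s
      using that by (intro completely_positive_comp[OF B] Suc.IH) auto
    show "set_integrable lborel {0..t} (\<lambda>s. f (t - s) *\<^sub>R B (picard f B k s X))" for X
      by (rule picard_integrable[OF Bl])
  qed
  then show ?case by (simp add: fun_eq_iff[symmetric])
qed

lemma picard_unital:
  assumes "B (mat 1) = mat 1" and t: "0 \<le> t"
  shows "picard f B k t (mat 1) = mat 1"
  using t
proof (induction k arbitrary: t)
  case (Suc k)
  have "conv f (\<lambda>s. B (picard f B k s (mat 1))) t = conv f (\<lambda>_. mat 1) t"
    by (rule conv_cong) (auto simp: Suc.IH assms(1))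
  also have "\<dots> = (LINT s:{0..t}|lborel. f s) *\<^sub>R mat 1" by (rule conv_const)
  finally show ?case by (simp add: algebra_simps)
qed simp

end


section \<open>The master equation with kernel \<open>\<kappa>(t)(B - I)\<close>\<close>

text \<open>The hypotheses only concern \<open>f\<close> on \<open>[0, \<infinity>)\<close>; its extension by zero is a subprobability
  density in the sense of the locale.\<close>

lemma subprob_density_zero_ext:
  assumes f_meas: "set_borel_measurable lborel {0..} f"
    and f_nonneg: "\<forall>t\<ge>0. f t \<ge> 0"
    and f_int: "(\<integral>\<^sup>+ s\<in>{0..}. ennreal (f s) \<partial>lborel) \<le> 1"
  shows "subprob_density (zero_ext f)"
proof
  let ?f = "zero_ext f"
  show fm: "?f \<in> borel_measurable borel"
    using f_meas unfolding set_borel_measurable_def zero_ext_def by simp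
  show fnn: "0 \<le> ?f x" for x using f_nonneg by (simp add: zero_ext_def indicator_def)
  have nn_le_1: "(\<integral>\<^sup>+ s. ennreal (norm (indicator {0..T} s *\<^sub>R ?f s)) \<partial>lborel) \<le> 1" for T
  proof -
    have "(\<integral>\<^sup>+ s. ennreal (norm (indicator {0..T} s *\<^sub>R ?f s)) \<partial>lborel)
        \<le> (\<integral>\<^sup>+ s\<in>{0..}. ennreal (f s) \<partial>lborel)"
      by (intro nn_integral_mono) (use f_nonneg in \<open>auto simp: zero_ext_def indicator_def\<close>)
    then show ?thesis using f_int by simp
  qed
  show "set_integrable lborel {0..T} ?f" for T
    unfolding set_integrable_def integrable_iff_bounded
    using nn_le_1[of T] fm by (auto simp: le_less_trans[OF _ ennreal_one_less_top])
  show "(LINT s:{0..T}|lborel. ?f s) \<le> 1" for T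
  proof -
    have "(LINT s:{0..T}|lborel. ?f s)
        = enn2real (\<integral>\<^sup>+ s. ennreal (indicator {0..T} s *\<^sub>R ?f s) \<partial>lborel)"
      unfolding set_lebesgue_integral_def
      by (rule integral_eq_nn_integral) (use fm in \<open>auto simp: fnn\<close>)
    also have "(\<integral>\<^sup>+ s. ennreal (indicator {0..T} s *\<^sub>R ?f s) \<partial>lborel)
        = (\<integral>\<^sup>+ s. ennreal (norm (indicator {0..T} s *\<^sub>R ?f s)) \<partial>lborel)"
      by (intro nn_integral_cong) (simp add: fnn)
    also have "enn2real \<dots> \<le> enn2real 1" by (rule enn2real_mono[OF nn_le_1]) simp
    finally show ?thesis by simp
  qed
qed

lemma set_integral_zero_ext:
  "(LINT s:{0..t}|lborel. zero_ext f s) = (LINT s:{0..t}|lborel. f s)"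
  by (rule set_lebesgue_integral_cong) (auto simp: zero_ext_def)

lemma master_equation_renewal:
  fixes f g \<kappa> :: "real \<Rightarrow> real" and B :: "'a::euclidean_space \<Rightarrow> 'a" and u :: "real \<Rightarrow> 'a"
  assumes f: "subprob_density (zero_ext f)"
    and g_def: "\<forall>t\<ge>0. g t = 1 - (LBINT s:{0..t}. f s)"
    and \<kappa>_loc_int: "\<forall>t\<ge>0. set_integrable lborel {0..t} \<kappa>"
    and \<kappa>_eq: "AE t in lborel. t \<ge> 0 \<longrightarrow> (LBINT s:{0..t}. g (t - s) * \<kappa> s) = f t"
    and Bl: "bounded_linear B"
    and ode: "\<forall>t\<ge>0. (u has_vector_derivative
      (LINT s:{0..t}|lborel. \<kappa> (t - s) *\<^sub>R (B (u s) - u s))) (at t within {0..})"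
    and t: "0 \<le> t"
  shows "u t = (1 - (LINT s:{0..t}|lborel. zero_ext f s)) *\<^sub>R u 0
    + conv (zero_ext f) (\<lambda>s. B (u s)) t"
proof -
  interpret subprob_density "zero_ext f" by (rule f)
  text \<open>Only \<open>\<kappa>\<close> on \<open>[0, t]\<close> matters; its truncation there is Borel measurable.\<close>
  define \<kappa>t where "\<kappa>t = (\<lambda>x. indicator {0..t} x *\<^sub>R \<kappa> x)"
  have ki: "set_integrable lborel {0..t} \<kappa>" using \<kappa>_loc_int t by blast
  have "\<kappa>t \<in> borel_measurable lborel"
    unfolding \<kappa>t_def by (rule borel_measurable_integrable[OF ki[unfolded set_integrable_def]])
  then have \<kappa>t_meas[measurable]: "\<kappa>t \<in> borel_measurable borel" by (simp only: measurable_lborel2)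
  have \<kappa>t_int: "set_integrable lborel {0..t} \<kappa>t"
  proof -
    have "(\<lambda>x. indicator {0..t} x *\<^sub>R \<kappa>t x) = (\<lambda>x. indicator {0..t} x *\<^sub>R \<kappa> x)"
      by (auto simp: \<kappa>t_def indicator_def)
    then show ?thesis using ki unfolding set_integrable_def by simp
  qed
  show ?thesis
  proof (rule renewal_equation[OF t f_measurable f_integrable _ \<kappa>t_meas \<kappa>t_int _ Bl])
    show "continuous_on {0..} u" by (rule continuous_on_vector_derivative) (use ode in blast)
    show "\<bar>LINT s:{0..x}|lborel. zero_ext f s\<bar> \<le> 1" for x
      using f_mass_le_1[of x] mass_nonneg[of x] by simp
    show "AE \<tau> in lborel. \<tau> \<in> {0..t} \<longrightarrow>
        conv (\<lambda>x. 1 - (LINT s:{0..x}|lborel. zero_ext f s)) \<kappa>t \<tau> = zero_ext f \<tau>"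
    proof (rule AE_mp[OF \<kappa>_eq], rule AE_I2, intro impI)
      fix \<tau> assume eq: "0 \<le> \<tau> \<longrightarrow> (LBINT s:{0..\<tau>}. g (\<tau> - s) * \<kappa> s) = f \<tau>" and \<tau>: "\<tau> \<in> {0..t}"
      have "conv (\<lambda>x. 1 - (LINT s:{0..x}|lborel. zero_ext f s)) \<kappa>t \<tau>
          = (LBINT s:{0..\<tau>}. g (\<tau> - s) * \<kappa> s)"
        unfolding conv_def
        by (rule set_lebesgue_integral_cong) (use \<tau> in \<open>auto simp: set_integral_zero_ext \<kappa>t_def g_def\<close>)
      then show "conv (\<lambda>x. 1 - (LINT s:{0..x}|lborel. zero_ext f s)) \<kappa>t \<tau> = zero_ext f \<tau>"
        using eq \<tau> by (simp add: zero_ext_def)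
    qed
    fix \<sigma> assume \<sigma>: "\<sigma> \<in> {0..t}"
    have "(LINT s:{0..\<sigma>}|lborel. \<kappa> (\<sigma> - s) *\<^sub>R (B (u s) - u s)) = conv \<kappa>t (\<lambda>s. B (u s) - u s) \<sigma>"
      unfolding conv_def by (rule set_lebesgue_integral_cong) (use \<sigma> in \<open>auto simp: \<kappa>t_def\<close>)
    then show "(u has_vector_derivative conv \<kappa>t (\<lambda>s. B (u s) - u s) \<sigma>) (at \<sigma> within {0..})"
      using ode[rule_format, of \<sigma>] \<sigma> by simp
  qed
qed

theorem corollary1:
  fixes f g \<kappa> :: "real \<Rightarrow> real"
    and B :: "'d::finite cmat \<Rightarrow> 'd cmat"
    and A :: "real \<Rightarrow> 'd cmat \<Rightarrow> 'd cmat"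
  assumes f_meas: "set_borel_measurable lborel {0..} f"
    and f_nonneg: "\<forall>t\<ge>0. f t \<ge> 0"
    and f_int: "(\<integral>\<^sup>+ s\<in>{0..}. ennreal (f s) \<partial>lborel) \<le> 1"
    and g_def: "\<forall>t\<ge>0. g t = 1 - (LBINT s:{0..t}. f s)"
    and \<kappa>_loc_int: "\<forall>t\<ge>0. set_integrable lborel {0..t} \<kappa>"
    and \<kappa>_eq: "AE t in lborel. t \<ge> 0 \<longrightarrow> (LBINT s:{0..t}. g (t - s) * \<kappa> s) = f t"
    and B_cp: "completely_positive B"
    and B_unital: "B (mat 1) = mat 1"
    and A_lin: "\<forall>t\<ge>0. cmat_linear (A t)"
    and A_0: "\<forall>X. A 0 X = X"
    and A_int: "\<forall>t\<ge>0. \<forall>X. set_integrable lborel {0..t}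
                   (\<lambda>s. \<kappa> (t - s) *\<^sub>R (B (A s X) - A s X))"
    and A_ode: "\<forall>t\<ge>0. \<forall>X. ((\<lambda>\<tau>. A \<tau> X) has_vector_derivative
                   (LINT s:{0..t}|lborel. \<kappa> (t - s) *\<^sub>R (B (A s X) - A s X))) (at t within {0..})"
  shows "\<forall>t\<ge>0. completely_positive (A t) \<and> A t (mat 1) = mat 1"
proof -
  have f: "subprob_density (zero_ext f)"
    by (rule subprob_density_zero_ext[OF f_meas f_nonneg f_int])
  interpret subprob_density "zero_ext f" by (rule f)
  have B_bl: "bounded_linear B"
    using B_cp by (simp add: completely_positive_def bounded_linear_cmat_linear)
  text \<open>\<open>A\<^sub>t X\<close> solves the renewal equation (step 1), so it is the limit of the Picard iterates
    (step 3).\<close>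
  have lim: "(\<lambda>k. picard (zero_ext f) B k t X) \<longlonglongrightarrow> A t X" if t: "0 \<le> t" for t X
  proof -
    have "(\<lambda>k. picard (zero_ext f) B k t (A 0 X)) \<longlonglongrightarrow> A t X"
    proof (rule picard_tendsto[OF B_bl _ _ t])
      show "continuous_on {0..} (\<lambda>s. A s X)"
        by (rule continuous_on_vector_derivative) (use A_ode in auto)
      show "A \<tau> X = (1 - (LINT s:{0..\<tau>}|lborel. zero_ext f s)) *\<^sub>R A 0 X
          + conv (zero_ext f) (\<lambda>s. B (A s X)) \<tau>" if "0 \<le> \<tau>" for \<tau>
        by (rule master_equation_renewal[OF f g_def \<kappa>_loc_int \<kappa>_eq B_bl _ that]) (use A_ode in auto)
    qed
    then show ?thesis using A_0 by simp
  qed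
  show ?thesis
  proof (intro allI impI conjI)
    fix t :: real assume t: "0 \<le> t"
    show "completely_positive (A t)"
      by (rule completely_positive_limit[OF picard_completely_positive[OF B_cp t] lim[OF t]])
         (use A_lin t in auto)
    show "A t (mat 1) = mat 1"
      using LIMSEQ_unique[OF lim[OF t, of "mat 1"]] picard_unital[where B=B, OF B_unital t] by simp
  qed
qed

end
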